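(* Let $n\ge1$ and $\mathbf{x}\in\{0,1\}^n$. Let $\omega=\omega(\mathbf{x}')$, let $m$ be the number of 1-runs in $\mathbf{x}'$, and for $i=1,2$ let $m_i$ be the number of 1-runs of $\mathbf{x}'$ of length $i$. For $j=0,1,\dots,6$ let $B_j$ be the number of $\mathbf{y}\in\Phi_3(\mathbf{x})$ with $\omega(\mathbf{y}')=\omega-j$. Then (a) $B_0+B_1=1+m+\binom{m}{2}+\binom{m}{3}$; (b) $B_2+B_3=(\omega-m)\bigl(1+m+\binom{m}{2}\bigr)-m(m-m_1)$; (c) $B_4+B_5=(1+m)\left[\binom{\omega-m}{2}-(\omega-m)\right]-(\omega-2m-3)(m-m_1)-m_2$; (d) $B_6=\binom{\omega-m}{3}-(\omega-m)(\omega-m+1)+(\omega-m)(m-m_1)+4(\omega-2m+m_1)+m_2$.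
   Context: A grain pattern of length $n$ is a subset $E\subseteq\{2,\dots,n\}$ containing no two consecutive integers. For such $E$, $\phi_E:\{0,1\}^n\to\{0,1\}^n$ sends $\mathbf{x}=(x_1,\dots,x_n)$ to $\mathbf{y}$ with $y_j=x_{j-1}$ if $j\in E$ and $y_j=x_j$ otherwise. $\Phi_t(\mathbf{x})=\{\phi_E(\mathbf{x}): E \text{ a grain pattern of length } n,\ |E|\le t\}$ (a set). The derivative sequence of $\mathbf{x}$ is $\mathbf{x}'=(x'_2,\dots,x'_n)$ with $x'_j=x_{j-1}\oplus x_j$ (mod 2); $\omega(\cdot)$ is Hamming weight; a 1-run of $\mathbf{x}'$ is a maximal block of consecutive 1s. Binomial coefficients $\binom{a}{b}$ are $0$ when $b>a\ge0$. *)

theory Defs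
  imports Main
begin

text \<open>Binary words of length n are bool lists x with length x = n; the paper's
 x_j (1-indexed) is x ! (j - 1).\<close>

definition grain_pattern :: "nat \<Rightarrow> nat set \<Rightarrow> bool" where
  "grain_pattern n E \<longleftrightarrow> E \<subseteq> {2..n} \<and> (\<forall>j\<in>E. Suc j \<notin> E)"

definition phi :: "nat \<Rightarrow> nat set \<Rightarrow> bool list \<Rightarrow> bool list" where
  "phi n E x = map (\<lambda>j. if j \<in> E then x ! (j - 2) else x ! (j - 1)) [1..<n+1]"

definition Phi :: "nat \<Rightarrow> nat \<Rightarrow> bool list \<Rightarrow> bool list set" where
  "Phi n t x = {phi n E x | E. grain_pattern n E \<and> card E \<le> t}"

text \<open>Derivative sequence: entry k (0-indexed) is x'_(k+2) = x_(k+1) xor x_(k+2).\<close>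
definition deriv_seq :: "bool list \<Rightarrow> bool list" where
  "deriv_seq x = map (\<lambda>(a, b). a \<noteq> b) (zip x (tl x))"

definition weight :: "bool list \<Rightarrow> nat" where
  "weight w = length (filter id w)"

text \<open>1-runs as pairs (a,b) of 0-indexed start/end positions of a maximal block of 1s.\<close>
definition one_runs :: "bool list \<Rightarrow> (nat \<times> nat) set" where
  "one_runs w = {(a, b). a \<le> b \<and> b < length w \<and> (\<forall>k\<in>{a..b}. w ! k)
      \<and> (a = 0 \<or> \<not> w ! (a - 1)) \<and> (Suc b = length w \<or> \<not> w ! Suc b)}"

definition num_runs_len :: "bool list \<Rightarrow> nat \<Rightarrow> nat" where
  "num_runs_len w i = card {(a, b) \<in> one_runs w. Suc b - a = i}"

end

theory Submission
  imports Defs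
begin

text \<open>Only the positions \<open>j \<in> E\<close> with \<open>x_{j-1} \<noteq> x_j\<close> have an effect, so \<open>\<Phi>_t(x)\<close> is in bijection
with the sets \<open>S\<close> of at most \<open>t\<close> pairwise non-adjacent 1-positions of \<open>x'\<close>. Each \<open>p \<in> S\<close> clears the
1 of \<open>x'\<close> at \<open>p\<close> and complements the bit after it, so the weight drops by \<open>2k + \<epsilon>\<close>, where \<open>k\<close>
counts the elements of \<open>S\<close> that are not the last 1 of their run and \<open>\<epsilon> \<le> 1\<close> records whether \<open>S\<close>
contains the last position of \<open>x'\<close>. Hence \<open>B_{2k} + B_{2k+1}\<close> is the number of such sets of size at
most 3 with the given \<open>k\<close>, and \<open>B_7 = 0\<close>. These numbers obey simple recurrences when \<open>x'\<close> is
extended at the front by \<open>0\<close>, by \<open>10\<close>, or by a \<open>1\<close> in front of a \<open>1\<close>, and induction along these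
extensions gives their closed forms in \<open>\<omega>\<close>, \<open>m\<close>, \<open>m\<^sub>1\<close>, \<open>m\<^sub>2\<close>.\<close>

section \<open>Sparse sets of ones\<close>

definition sparse_ones :: "bool list \<Rightarrow> nat set set" where
  "sparse_ones d = {S. S \<subseteq> {p. p < length d \<and> d ! p} \<and> (\<forall>p\<in>S. Suc p \<notin> S)}"

definition nonlast_count :: "bool list \<Rightarrow> nat set \<Rightarrow> nat" where
  "nonlast_count d S = card {p\<in>S. Suc p < length d \<and> d ! Suc p}"

definition last_count :: "bool list \<Rightarrow> nat set \<Rightarrow> nat" where
  "last_count d S = card {p\<in>S. Suc p = length d}"

definition sparse_count :: "bool list \<Rightarrow> nat \<Rightarrow> nat \<Rightarrow> nat" where
  "sparse_count d a k = card {S\<in>sparse_ones d. card S = a \<and> nonlast_count d S = k}"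

lemma finite_sparse_ones_member: "S \<in> sparse_ones d \<Longrightarrow> finite S"
  unfolding sparse_ones_def by (auto intro: finite_subset[of _ "{..<length d}"])

lemma finite_sparse_ones: "finite (sparse_ones d)"
proof -
  have "sparse_ones d \<subseteq> Pow {..<length d}" unfolding sparse_ones_def by auto
  thus ?thesis by (rule finite_subset) auto
qed

lemma sparse_ones_Nil: "sparse_ones [] = {{}}"
  unfolding sparse_ones_def by auto

lemma nonlast_count_le_card: "S \<in> sparse_ones d \<Longrightarrow> nonlast_count d S \<le> card S"
  unfolding nonlast_count_def by (rule card_mono) (auto dest: finite_sparse_ones_member)

lemma last_count_le_1: "last_count d S \<le> 1"
proof -
  have "{p\<in>S. Suc p = length d} \<subseteq> {length d - 1}" by auto
  from card_mono[OF _ this] show ?thesis unfolding last_count_def by simp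
qed

lemma nonlast_count_plus_last_count_le_card:
  assumes "S \<in> sparse_ones d"
  shows "nonlast_count d S + last_count d S \<le> card S"
proof -
  have f: "finite S" using assms by (rule finite_sparse_ones_member)
  have "nonlast_count d S + last_count d S
      = card ({p\<in>S. Suc p < length d \<and> d ! Suc p} \<union> {p\<in>S. Suc p = length d})"
    unfolding nonlast_count_def last_count_def by (rule card_Un_disjoint[symmetric]) (use f in auto)
  also have "\<dots> \<le> card S" by (rule card_mono) (use f in auto)
  finally show ?thesis .
qed

lemma sparse_count_eq_0:
  assumes "a < k"
  shows "sparse_count d a k = 0"
proof -
  have "{S\<in>sparse_ones d. card S = a \<and> nonlast_count d S = k} = {}"
    using assms nonlast_count_le_card by fastforce
  thus ?thesis unfolding sparse_count_def by (simp only: card.empty)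
qed

section \<open>Effective grain patterns\<close>

lemma length_deriv_seq: "length (deriv_seq x) = length x - 1"
  unfolding deriv_seq_def by simp

lemma nth_deriv_seq: "p < length x - 1 \<Longrightarrow> deriv_seq x ! p = (x ! p \<noteq> x ! Suc p)"
  unfolding deriv_seq_def by (simp add: nth_tl)

lemma weight_eq_card: "weight w = card {p. p < length w \<and> w ! p}"
  unfolding weight_def by (simp add: length_filter_conv_card)

lemma length_phi: "length (phi n E x) = n"
  unfolding phi_def by simp

lemma nth_phi: "i < n \<Longrightarrow> phi n E x ! i = (if Suc i \<in> E then x ! (i - 1) else x ! i)"
  unfolding phi_def by (simp add: nth_upt del: upt_Suc)

text \<open>Positions in \<open>x'\<close> are 0-based while grain positions are 1-based in \<open>x\<close>: the 1 of \<open>x'\<close> at \<open>p\<close>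
sits between \<open>x_{p+1}\<close> and \<open>x_{p+2}\<close> and is moved by \<open>j = p + 2\<close>.\<close>

definition grain_set :: "nat set \<Rightarrow> nat set" where
  "grain_set S = (\<lambda>p. Suc (Suc p)) ` S"

lemma Suc_mem_grain_set: "Suc i \<in> grain_set S \<longleftrightarrow> i \<in> Suc ` S"
  unfolding grain_set_def by auto

lemma card_grain_set: "card (grain_set S) = card S"
  unfolding grain_set_def by (rule card_image) (auto simp: inj_on_def)

lemma nth_phi_grain_set:
  "i < n \<Longrightarrow> phi n (grain_set S) x ! i = (if i \<in> Suc ` S then x ! (i - 1) else x ! i)"
  by (simp add: nth_phi Suc_mem_grain_set)

definition grain_deriv :: "bool list \<Rightarrow> nat set \<Rightarrow> bool list" where
  "grain_deriv d S = map (\<lambda>p. p \<notin> S \<and> ((p \<in> Suc ` S) \<noteq> d ! p)) [0..<length d]"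

lemma weight_grain_deriv:
  assumes S: "S \<in> sparse_ones d"
  shows "int (weight (grain_deriv d S)) = int (weight d) - 2 * int (nonlast_count d S) - int (last_count d S)"
proof -
  let ?D = "{p. p < length d \<and> d ! p}"
  let ?A1 = "?D - S - Suc ` S"
  let ?A2 = "{p\<in>Suc ` S. p < length d \<and> \<not> d ! p}"
  let ?J = "{p\<in>S. Suc p < length d \<and> \<not> d ! Suc p}"
  have SD: "S \<subseteq> ?D" and sparse: "\<forall>p\<in>S. Suc p \<notin> S" and fin: "finite S"
    using S finite_sparse_ones_member unfolding sparse_ones_def by auto
  have "weight (grain_deriv d S) = card (?A1 \<union> ?A2)"
    unfolding weight_eq_card grain_deriv_def using sparse by (intro arg_cong[where f=card]) auto
  also have "\<dots> = card ?A1 + card ?A2" by (rule card_Un_disjoint) auto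
  finally have new: "weight (grain_deriv d S) = card ?A1 + card ?A2" .
  have card3: "card (A \<union> B \<union> C) = card A + card B + card C"
    if "finite A" "finite B" "finite C" "A \<inter> B = {}" "(A \<union> B) \<inter> C = {}" for A B C :: "nat set"
    using that by (simp add: card_Un_disjoint)
  have "weight d = card (S \<union> (?D \<inter> Suc ` S) \<union> ?A1)"
    unfolding weight_eq_card using SD by (intro arg_cong[where f=card]) auto
  also have "\<dots> = card S + card (?D \<inter> Suc ` S) + card ?A1"
    by (rule card3) (use fin sparse in auto)
  finally have old: "weight d = card S + card (?D \<inter> Suc ` S) + card ?A1" .
  have "?D \<inter> Suc ` S = Suc ` {p\<in>S. Suc p < length d \<and> d ! Suc p}" by auto
  hence "card (?D \<inter> Suc ` S) = nonlast_count d S" unfolding nonlast_count_def by (simp add: card_image)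
  moreover have "?A2 = Suc ` ?J" by auto
  hence "card ?A2 = card ?J" by (simp add: card_image)
  moreover have "card S = card ({p\<in>S. Suc p < length d \<and> d ! Suc p} \<union> ?J \<union> {p\<in>S. Suc p = length d})"
    using SD by (intro arg_cong[where f=card]) auto
  hence "card S = nonlast_count d S + card ?J + last_count d S"
    unfolding nonlast_count_def last_count_def by (subst (asm) card3) (use fin in auto)
  ultimately show ?thesis using new old by simp
qed

context
  fixes n :: nat and x :: "bool list"
  assumes length_x: "length x = n"
begin

lemma sparse_ones_deriv_seq_iff:
  "S \<in> sparse_ones (deriv_seq x) \<longleftrightarrow> (\<forall>p\<in>S. p < n - 1 \<and> x ! p \<noteq> x ! Suc p \<and> Suc p \<notin> S)"
  unfolding sparse_ones_def using length_x by (auto simp: length_deriv_seq nth_deriv_seq)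

lemma phi_eq_phi_grain_set:
  assumes "grain_pattern n E"
  shows "phi n E x = phi n (grain_set {p. Suc (Suc p) \<in> E \<and> x ! p \<noteq> x ! Suc p}) x"
proof (rule nth_equalityI)
  fix i assume "i < length (phi n E x)"
  hence i: "i < n" by (simp add: length_phi)
  have "Suc i \<in> E \<Longrightarrow> 0 < i" using assms unfolding grain_pattern_def by force
  thus "phi n E x ! i = phi n (grain_set {p. Suc (Suc p) \<in> E \<and> x ! p \<noteq> x ! Suc p}) x ! i"
    using i by (cases i) (auto simp: nth_phi Suc_mem_grain_set)
qed (simp add: length_phi)

lemma Phi_eq_image_sparse_ones:
  "Phi n t x = (\<lambda>S. phi n (grain_set S) x) ` {S\<in>sparse_ones (deriv_seq x). card S \<le> t}"
proof
  show "Phi n t x \<subseteq> (\<lambda>S. phi n (grain_set S) x) ` {S\<in>sparse_ones (deriv_seq x). card S \<le> t}"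
  proof
    fix y assume "y \<in> Phi n t x"
    then obtain E where y: "y = phi n E x" and E: "grain_pattern n E" "card E \<le> t"
      unfolding Phi_def by blast
    let ?S = "{p. Suc (Suc p) \<in> E \<and> x ! p \<noteq> x ! Suc p}"
    have E2: "E \<subseteq> {2..n}" "\<forall>j\<in>E. Suc j \<notin> E" using E(1) unfolding grain_pattern_def by auto
    have "?S \<in> sparse_ones (deriv_seq x)" unfolding sparse_ones_deriv_seq_iff using E2 by fastforce
    moreover have "grain_set ?S \<subseteq> E" unfolding grain_set_def by auto
    hence "card (grain_set ?S) \<le> card E" using E2(1) by (meson card_mono finite_atLeastAtMost finite_subset)
    hence "card ?S \<le> t" using E(2) card_grain_set[of ?S] by simp
    ultimately show "y \<in> (\<lambda>S. phi n (grain_set S) x) ` {S\<in>sparse_ones (deriv_seq x). card S \<le> t}"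
      using y phi_eq_phi_grain_set[OF E(1)] by blast
  qed
next
  show "(\<lambda>S. phi n (grain_set S) x) ` {S\<in>sparse_ones (deriv_seq x). card S \<le> t} \<subseteq> Phi n t x"
  proof
    fix y assume "y \<in> (\<lambda>S. phi n (grain_set S) x) ` {S\<in>sparse_ones (deriv_seq x). card S \<le> t}"
    then obtain S where y: "y = phi n (grain_set S) x" and S: "S \<in> sparse_ones (deriv_seq x)" "card S \<le> t"
      by blast
    have "grain_pattern n (grain_set S)"
      using S(1) unfolding sparse_ones_deriv_seq_iff grain_pattern_def grain_set_def by fastforce
    moreover have "card (grain_set S) \<le> t" using S(2) card_grain_set[of S] by simp
    ultimately show "y \<in> Phi n t x" unfolding Phi_def using y by blast
  qed
qed

lemma inj_on_phi_grain_set: "inj_on (\<lambda>S. phi n (grain_set S) x) (sparse_ones (deriv_seq x))"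
proof (rule inj_onI, rule ccontr)
  have differ: "phi n (grain_set A) x \<noteq> phi n (grain_set A') x"
    if "A \<in> sparse_ones (deriv_seq x)" "p \<in> A" "p \<notin> A'" for A A' p
  proof -
    have p: "p < n - 1" "x ! p \<noteq> x ! Suc p" using that(1,2) unfolding sparse_ones_deriv_seq_iff by auto
    have "phi n (grain_set A) x ! Suc p = x ! p" "phi n (grain_set A') x ! Suc p = x ! Suc p"
      using p that(2,3) by (simp_all add: nth_phi_grain_set image_iff)
    thus ?thesis using p(2) by metis
  qed
  fix S S' assume S: "S \<in> sparse_ones (deriv_seq x)" "S' \<in> sparse_ones (deriv_seq x)"
    and eq: "phi n (grain_set S) x = phi n (grain_set S') x" and "S \<noteq> S'"
  then obtain p where "p \<in> S \<and> p \<notin> S' \<or> p \<in> S' \<and> p \<notin> S" by blast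
  thus False using differ[OF S(1)] differ[OF S(2)] eq by metis
qed

lemma deriv_seq_phi_grain_set:
  assumes S: "S \<in> sparse_ones (deriv_seq x)"
  shows "deriv_seq (phi n (grain_set S) x) = grain_deriv (deriv_seq x) S"
proof (rule nth_equalityI)
  fix p assume "p < length (deriv_seq (phi n (grain_set S) x))"
  hence p: "p < n - 1" by (simp add: length_deriv_seq length_phi)
  have "\<forall>q\<in>S. q < n - 1 \<and> x ! q \<noteq> x ! Suc q \<and> Suc q \<notin> S" using S sparse_ones_deriv_seq_iff by blast
  thus "deriv_seq (phi n (grain_set S) x) ! p = grain_deriv (deriv_seq x) S ! p"
    using p length_x
    by (cases p) (auto simp: grain_deriv_def nth_deriv_seq length_deriv_seq length_phi nth_phi_grain_set)
qed (simp add: grain_deriv_def length_deriv_seq length_phi length_x)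

end

lemma card_Phi_weight_drop:
  assumes "length x = n"
  shows "card {y \<in> Phi n t x. int (weight (deriv_seq y)) = int (weight (deriv_seq x)) - int j}
       = card {S \<in> sparse_ones (deriv_seq x). card S \<le> t
                 \<and> 2 * nonlast_count (deriv_seq x) S + last_count (deriv_seq x) S = j}"
proof -
  let ?f = "\<lambda>S. phi n (grain_set S) x"
  let ?d = "deriv_seq x"
  have drop: "int (weight (deriv_seq (?f S))) = int (weight ?d) - int j
      \<longleftrightarrow> 2 * nonlast_count ?d S + last_count ?d S = j" if "S \<in> sparse_ones ?d" for S
    using weight_grain_deriv[OF that] deriv_seq_phi_grain_set[OF assms that] by simp arith
  have "{y \<in> Phi n t x. int (weight (deriv_seq y)) = int (weight ?d) - int j}
      = ?f ` {S \<in> sparse_ones ?d. card S \<le> t \<and> 2 * nonlast_count ?d S + last_count ?d S = j}"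
    unfolding Phi_eq_image_sparse_ones[OF assms] using drop by auto
  moreover have "inj_on ?f {S \<in> sparse_ones ?d. card S \<le> t \<and> 2 * nonlast_count ?d S + last_count ?d S = j}"
    by (rule inj_on_subset[OF inj_on_phi_grain_set[OF assms]]) auto
  ultimately show ?thesis by (simp add: card_image)
qed

section \<open>Recurrences for the number of sparse sets\<close>

lemma nonlast_count_Cons_Suc_image: "nonlast_count (c # r) (Suc ` S) = nonlast_count r S"
proof -
  have "{p\<in>Suc ` S. Suc p < length (c#r) \<and> (c#r) ! Suc p}
      = Suc ` {p\<in>S. Suc p < length r \<and> r ! Suc p}"
    by auto
  thus ?thesis unfolding nonlast_count_def by (simp add: card_image)
qed

lemma nonlast_count_Cons_insert_0:
  assumes "finite S"
  shows "nonlast_count (c # r) (insert 0 (Suc ` S)) = nonlast_count r S + (if r \<noteq> [] \<and> hd r then 1 else 0)"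
proof -
  let ?X = "Suc ` {p\<in>S. Suc p < length r \<and> r ! Suc p}"
  have "{p\<in>insert 0 (Suc ` S). Suc p < length (c#r) \<and> (c#r) ! Suc p}
      = (if r \<noteq> [] \<and> hd r then insert 0 ?X else ?X)"
    by (cases r) auto
  moreover have "card ?X = nonlast_count r S" unfolding nonlast_count_def by (simp add: card_image)
  moreover have "0 \<notin> ?X" "finite ?X" using assms by auto
  ultimately show ?thesis unfolding nonlast_count_def by simp
qed

lemma sparse_ones_Cons_without_0: "{S\<in>sparse_ones (c # r). 0 \<notin> S} = image Suc ` sparse_ones r"
proof
  show "{S\<in>sparse_ones (c#r). 0 \<notin> S} \<subseteq> image Suc ` sparse_ones r"
  proof
    fix S assume S: "S \<in> {S\<in>sparse_ones (c#r). 0 \<notin> S}"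
    let ?S' = "{q. Suc q \<in> S}"
    have "S = Suc ` ?S'" using S by (auto simp: image_iff) (metis not0_implies_Suc)
    moreover have "?S' \<in> sparse_ones r" using S unfolding sparse_ones_def by auto
    ultimately show "S \<in> image Suc ` sparse_ones r" by blast
  qed
qed (auto simp: sparse_ones_def)

lemma sparse_ones_True_with_0:
  "{S\<in>sparse_ones (True # r). 0 \<in> S} = (\<lambda>S. insert 0 (Suc ` S)) ` {S\<in>sparse_ones r. 0 \<notin> S}"
proof
  show "{S\<in>sparse_ones (True#r). 0 \<in> S} \<subseteq> (\<lambda>S. insert 0 (Suc ` S)) ` {S\<in>sparse_ones r. 0 \<notin> S}"
  proof
    fix S assume S: "S \<in> {S\<in>sparse_ones (True#r). 0 \<in> S}"
    let ?S' = "{q. Suc q \<in> S}"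
    have "S = insert 0 (Suc ` ?S')" using S by (auto simp: image_iff) (metis not0_implies_Suc)
    moreover have "?S' \<in> {S\<in>sparse_ones r. 0 \<notin> S}" using S unfolding sparse_ones_def by auto
    ultimately show "S \<in> (\<lambda>S. insert 0 (Suc ` S)) ` {S\<in>sparse_ones r. 0 \<notin> S}" by blast
  qed
qed (auto simp: sparse_ones_def)

lemma card_sparse_ones_Cons_without_0:
  "card {S\<in>sparse_ones (c # r). 0 \<notin> S \<and> P (card S) (nonlast_count (c # r) S)}
 = card {S\<in>sparse_ones r. P (card S) (nonlast_count r S)}"
proof -
  have "{S\<in>sparse_ones (c#r). 0 \<notin> S \<and> P (card S) (nonlast_count (c#r) S)}
      = {S\<in>image Suc ` sparse_ones r. P (card S) (nonlast_count (c#r) S)}"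
    using sparse_ones_Cons_without_0[of c r] by blast
  also have "\<dots> = image Suc ` {S\<in>sparse_ones r. P (card S) (nonlast_count r S)}"
    by (auto simp: nonlast_count_Cons_Suc_image card_image)
  finally show ?thesis by (simp add: card_image inj_on_def inj_image_eq_iff)
qed

lemma card_sparse_ones_True_with_0:
  "card {S\<in>sparse_ones (True # r). 0 \<in> S \<and> P (card S) (nonlast_count (True # r) S)}
 = card {S\<in>sparse_ones r. 0 \<notin> S \<and> P (Suc (card S)) (nonlast_count r S + (if r \<noteq> [] \<and> hd r then 1 else 0))}"
proof -
  let ?f = "\<lambda>S. insert 0 (Suc ` S)"
  have inj: "inj_on ?f X" for X :: "nat set set"
    by (rule inj_onI) (metis Zero_not_Suc image_iff insert_ident inj_image_eq_iff inj_Suc)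
  have "{S\<in>sparse_ones (True#r). 0 \<in> S \<and> P (card S) (nonlast_count (True#r) S)}
      = {S\<in>?f ` {S\<in>sparse_ones r. 0 \<notin> S}. P (card S) (nonlast_count (True#r) S)}"
    using sparse_ones_True_with_0[of r] by blast
  also have "\<dots> = ?f ` {S\<in>sparse_ones r. 0 \<notin> S \<and>
      P (Suc (card S)) (nonlast_count r S + (if r \<noteq> [] \<and> hd r then 1 else 0))}"
    by (auto simp: nonlast_count_Cons_insert_0 card_image finite_sparse_ones_member)
  finally show ?thesis by (simp add: card_image inj)
qed

lemma sparse_count_split:
  "sparse_count d a k = card {S\<in>sparse_ones d. 0 \<notin> S \<and> card S = a \<and> nonlast_count d S = k}
                      + card {S\<in>sparse_ones d. 0 \<in> S \<and> card S = a \<and> nonlast_count d S = k}"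
  unfolding sparse_count_def
  by (subst card_Un_disjoint[symmetric]) (auto intro: arg_cong[where f=card] simp: finite_sparse_ones)

lemma sparse_count_Nil: "sparse_count [] a k = (if a = 0 \<and> k = 0 then 1 else 0)"
proof -
  have "{S\<in>sparse_ones []. card S = a \<and> nonlast_count [] S = k} = (if a = 0 \<and> k = 0 then {{}} else {})"
    by (auto simp: sparse_ones_Nil nonlast_count_def)
  thus ?thesis unfolding sparse_count_def by simp
qed

lemma sparse_count_False: "sparse_count (False # r) a k = sparse_count r a k"
proof -
  have "{S\<in>sparse_ones (False#r). 0 \<in> S \<and> card S = a \<and> nonlast_count (False#r) S = k} = {}"
    unfolding sparse_ones_def by auto
  then have "card {S\<in>sparse_ones (False#r). 0 \<in> S \<and> card S = a \<and> nonlast_count (False#r) S = k} = 0"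
    by (simp only: card.empty)
  thus ?thesis
    using sparse_count_split[of "False # r" a k]
      card_sparse_ones_Cons_without_0[of False r "\<lambda>s i. s = a \<and> i = k"]
    by (simp add: sparse_count_def)
qed

lemma sparse_count_True: "sparse_count (True # r) a k = sparse_count r a k
   + card {S\<in>sparse_ones r. 0 \<notin> S \<and> Suc (card S) = a
                 \<and> nonlast_count r S + (if r \<noteq> [] \<and> hd r then 1 else 0) = k}"
  using sparse_count_split[of "True # r" a k]
    card_sparse_ones_Cons_without_0[of True r "\<lambda>s i. s = a \<and> i = k"]
    card_sparse_ones_True_with_0[of r "\<lambda>s i. s = a \<and> i = k"]
  by (simp add: sparse_count_def)

lemma sparse_count_True_Nil: "sparse_count [True] a k = (if a \<le> 1 \<and> k = 0 then 1 else 0)"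
proof -
  have "{S\<in>sparse_ones []. 0 \<notin> S \<and> Suc (card S) = a \<and> nonlast_count [] S = k}
      = (if a = 1 \<and> k = 0 then {{}} else {})"
    by (auto simp: sparse_ones_Nil nonlast_count_def)
  thus ?thesis using sparse_count_True[of "[]" a k] by (simp add: sparse_count_Nil)
qed

lemma sparse_count_True_False:
  "sparse_count (True # False # r) a k = sparse_count r a k + (if a \<ge> 1 then sparse_count r (a - 1) k else 0)"
proof -
  have "card {S\<in>sparse_ones (False#r). 0 \<notin> S \<and> Suc (card S) = a \<and> nonlast_count (False#r) S = k}
      = card {S\<in>sparse_ones r. Suc (card S) = a \<and> nonlast_count r S = k}"
    using card_sparse_ones_Cons_without_0[of False r "\<lambda>s i. Suc s = a \<and> i = k"] by simp
  also have "\<dots> = (if a \<ge> 1 then sparse_count r (a - 1) k else 0)"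
    unfolding sparse_count_def by (cases a) auto
  finally show ?thesis using sparse_count_True[of "False # r" a k] by (simp add: sparse_count_False)
qed

lemma sparse_count_True_True: "sparse_count (True # True # r) a k = sparse_count (True # r) a k
   + (if a \<ge> 1 \<and> k \<ge> 1 then sparse_count r (a - 1) (k - 1) else 0)"
proof -
  have "card {S\<in>sparse_ones (True#r). 0 \<notin> S \<and> Suc (card S) = a \<and> nonlast_count (True#r) S + 1 = k}
      = card {S\<in>sparse_ones r. Suc (card S) = a \<and> nonlast_count r S + 1 = k}"
    using card_sparse_ones_Cons_without_0[of True r "\<lambda>s i. Suc s = a \<and> i + 1 = k"] by simp
  also have "\<dots> = (if a \<ge> 1 \<and> k \<ge> 1 then sparse_count r (a - 1) (k - 1) else 0)"
    unfolding sparse_count_def by (cases a; cases k) auto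
  finally show ?thesis using sparse_count_True[of "True # r" a k] by simp
qed

section \<open>Runs of ones\<close>

primrec leading_ones :: "bool list \<Rightarrow> nat" where
  "leading_ones [] = 0"
| "leading_ones (b # r) = (if b then Suc (leading_ones r) else 0)"

lemma leading_ones_le_length: "leading_ones r \<le> length r"
  by (induction r) auto

lemma nth_less_leading_ones: "k < leading_ones r \<Longrightarrow> r ! k"
  by (induction r arbitrary: k) (auto simp: nth_Cons split: if_splits nat.splits)

lemma nth_leading_ones: "leading_ones r < length r \<Longrightarrow> \<not> r ! leading_ones r"
  by (induction r) (auto split: if_splits)

lemma leading_ones_maximal: "j \<le> length r \<Longrightarrow> \<forall>k<j. r ! k \<Longrightarrow> j \<le> leading_ones r"
proof (rule ccontr)
  assume "j \<le> length r" "\<forall>k<j. r ! k" "\<not> j \<le> leading_ones r"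
  thus False using nth_leading_ones[of r] leading_ones_le_length[of r] by auto
qed

lemma one_runs_Cons_Suc:
  "(Suc a, Suc b) \<in> one_runs (c # r) \<longleftrightarrow> (a, b) \<in> one_runs r \<and> (a = 0 \<longrightarrow> \<not> c)"
proof -
  have "(\<forall>k\<in>{Suc a..Suc b}. P k) \<longleftrightarrow> (\<forall>k\<in>{a..b}. P (Suc k))" for P
    by (auto, metis Suc_le_D Suc_le_mono atLeastAtMost_iff)
  hence shift: "(\<forall>k\<in>{Suc a..Suc b}. (c#r) ! k) \<longleftrightarrow> (\<forall>k\<in>{a..b}. r ! k)"
    by simp
  have "(Suc a, Suc b) \<in> one_runs (c#r) \<longleftrightarrow> a \<le> b \<and> b < length r \<and> (\<forall>k\<in>{a..b}. r ! k)
      \<and> \<not> (c#r) ! a \<and> (Suc b = length r \<or> \<not> r ! Suc b)"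
    unfolding one_runs_def by (simp only: shift mem_Collect_eq case_prod_conv) auto
  also have "\<dots> \<longleftrightarrow> (a, b) \<in> one_runs r \<and> (a = 0 \<longrightarrow> \<not> c)"
    unfolding one_runs_def by (cases a) auto
  finally show ?thesis .
qed

lemma one_runs_Cons_start_Suc: "(Suc a, 0) \<notin> one_runs (c # r)"
  unfolding one_runs_def by auto

lemma one_runs_False_start_0: "(0, b) \<notin> one_runs (False # r)"
proof
  assume "(0, b) \<in> one_runs (False # r)"
  hence "\<forall>k\<in>{0..b}. (False # r) ! k" unfolding one_runs_def by auto
  from bspec[OF this, of 0] show False by simp
qed

lemma one_runs_True_start_0: "(0, b) \<in> one_runs (True # r) \<longleftrightarrow> b = leading_ones r"
proof
  assume "(0, b) \<in> one_runs (True#r)"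
  hence h: "b \<le> length r" "\<forall>k\<in>{0..b}. (True#r) ! k" "b = length r \<or> \<not> r ! b"
    unfolding one_runs_def by auto
  have "\<forall>k<b. r ! k" using h(2) by (metis atLeastAtMost_iff le0 less_eq_Suc_le nth_Cons_Suc)
  hence "b \<le> leading_ones r" using leading_ones_maximal h(1) by blast
  moreover have "leading_ones r \<le> b"
    using h(3) leading_ones_le_length[of r] nth_less_leading_ones[of b r] by (metis linorder_not_le)
  ultimately show "b = leading_ones r" by simp
next
  assume b: "b = leading_ones r"
  have "\<forall>k\<in>{0..b}. (True#r) ! k" using nth_less_leading_ones b by (auto simp: nth_Cons split: nat.splits)
  moreover have "Suc b = length (True#r) \<or> \<not> (True#r) ! Suc b"
    using nth_leading_ones[of r] leading_ones_le_length[of r] b by force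
  moreover have "b < length (True#r)" using leading_ones_le_length[of r] b by simp
  ultimately show "(0, b) \<in> one_runs (True#r)" unfolding one_runs_def by auto
qed

lemma one_runs_start_0: "(0, b) \<in> one_runs r \<longleftrightarrow> leading_ones r \<noteq> 0 \<and> b = leading_ones r - 1"
  by (cases r) (auto simp: one_runs_def[of "[]"] one_runs_True_start_0 one_runs_False_start_0)

lemma finite_one_runs: "finite (one_runs d)"
proof -
  have "one_runs d \<subseteq> {..<length d} \<times> {..<length d}" unfolding one_runs_def by auto
  thus ?thesis by (rule finite_subset) auto
qed

lemma one_runs_False: "one_runs (False # r) = map_prod Suc Suc ` one_runs r"
proof (rule set_eqI)
  fix z :: "nat \<times> nat"
  obtain a b where z: "z = (a, b)" by fastforce
  show "z \<in> one_runs (False # r) \<longleftrightarrow> z \<in> map_prod Suc Suc ` one_runs r"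
    unfolding z using one_runs_Cons_Suc one_runs_Cons_start_Suc one_runs_False_start_0
    by (cases a; cases b) auto
qed

lemma one_runs_True:
  "one_runs (True # r) = insert (0, leading_ones r) (map_prod Suc Suc ` {z\<in>one_runs r. fst z \<noteq> 0})"
proof (rule set_eqI)
  fix z :: "nat \<times> nat"
  obtain a b where z: "z = (a, b)" by fastforce
  show "z \<in> one_runs (True # r) \<longleftrightarrow> z \<in> insert (0, leading_ones r) (map_prod Suc Suc ` {z\<in>one_runs r. fst z \<noteq> 0})"
    unfolding z using one_runs_Cons_Suc one_runs_Cons_start_Suc one_runs_True_start_0
    by (cases a; cases b) (auto simp: image_iff)
qed

definition runs_with :: "(nat \<Rightarrow> bool) \<Rightarrow> bool list \<Rightarrow> nat" where
  "runs_with Q w = card {(a, b) \<in> one_runs w. Q (Suc b - a)}"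

lemma runs_with_Nil: "runs_with Q [] = 0"
  unfolding runs_with_def one_runs_def by simp

lemma runs_with_False: "runs_with Q (False # r) = runs_with Q r"
proof -
  have "{(a, b) \<in> one_runs (False # r). Q (Suc b - a)} = map_prod Suc Suc ` {(a, b) \<in> one_runs r. Q (Suc b - a)}"
    unfolding one_runs_False by auto
  thus ?thesis unfolding runs_with_def by (simp add: card_image inj_on_def)
qed

lemma runs_with_True: "int (runs_with Q (True # r)) = int (runs_with Q r)
   - of_bool (leading_ones r \<noteq> 0 \<and> Q (leading_ones r)) + of_bool (Q (Suc (leading_ones r)))"
proof -
  let ?A = "{(a, b) \<in> one_runs r. a \<noteq> 0 \<and> Q (Suc b - a)}"
  let ?B = "{(a, b) \<in> one_runs r. a = 0 \<and> Q (Suc b - a)}"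
  have "{(a, b) \<in> one_runs r. Q (Suc b - a)} = ?A \<union> ?B" by auto
  hence "runs_with Q r = card ?A + card ?B"
    unfolding runs_with_def using finite_one_runs[of r]
    by (simp add: card_Un_disjoint disjoint_iff finite_subset[of _ "one_runs r"] subset_iff)
  moreover have "?B = (if leading_ones r \<noteq> 0 \<and> Q (leading_ones r) then {(0, leading_ones r - 1)} else {})"
    using one_runs_start_0[of _ r] by auto
  moreover have "{(a, b) \<in> one_runs (True # r). Q (Suc b - a)}
      = (if Q (Suc (leading_ones r)) then insert (0, leading_ones r) (map_prod Suc Suc ` ?A) else map_prod Suc Suc ` ?A)"
    unfolding one_runs_True by auto
  moreover have "card (map_prod Suc Suc ` ?A) = card ?A" by (simp add: card_image inj_on_def)
  moreover have "(0, leading_ones r) \<notin> map_prod Suc Suc ` ?A" "finite ?A"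
    using finite_one_runs[of r] by (auto simp: finite_subset[of _ "one_runs r"] subset_iff)
  ultimately show ?thesis unfolding runs_with_def by simp
qed

lemma card_one_runs_eq_runs_with: "card (one_runs w) = runs_with (\<lambda>_. True) w"
  unfolding runs_with_def by simp

lemma num_runs_len_eq_runs_with: "num_runs_len w i = runs_with (\<lambda>l. l = i) w"
  unfolding num_runs_len_def runs_with_def by simp

section \<open>Closed forms\<close>

text \<open>With \<open>f a k\<close> the number of sparse sets of size \<open>a\<close> with \<open>k\<close> non-final elements, the parameters
are \<open>W = \<omega> - m\<close>, \<open>M = m\<close>, \<open>P = m - m\<^sub>1\<close> (runs of length at least 2) and \<open>Q = m\<^sub>2\<close>.\<close>

definition closed_forms :: "int \<Rightarrow> int \<Rightarrow> int \<Rightarrow> int \<Rightarrow> (nat \<Rightarrow> nat \<Rightarrow> int) \<Rightarrow> bool" where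
  "closed_forms W M P Q f \<longleftrightarrow>
     f 0 0 = 1 \<and> f 1 0 = M \<and> 2 * f 2 0 = M * (M - 1) \<and> 6 * f 3 0 = M * (M - 1) * (M - 2)
     \<and> f 1 1 = W \<and> f 2 1 = W * M - P \<and> 2 * f 3 1 = W * M * (M - 1) - 2 * P * (M - 1)
     \<and> 2 * f 2 2 = W * (W - 1) - 2 * (W - P)
     \<and> 2 * f 3 2 = M * (W * (W - 1) - 2 * W + 2 * P) - 2 * P * (W - 2) - 2 * Q
     \<and> 6 * f 3 3 = W * (W - 1) * (W - 2) - 6 * W * (W + 1) + 6 * W * P + 24 * (W - P) + 6 * Q"

lemma closed_forms_True_False:
  assumes "closed_forms W M P Q f" and "\<And>a k. a < k \<Longrightarrow> f a k = 0"
    and "\<And>a k. h a k = f a k + (if 1 \<le> a then f (a - 1) k else 0)"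
    and "W' = W" "M' = M + 1" "P' = P" "Q' = Q"
  shows "closed_forms W' M' P' Q' h"
  using assms(1) assms(2)[of 0 1] assms(2)[of 0 2] assms(2)[of 1 2] assms(2)[of 0 3] assms(2)[of 1 3] assms(2)[of 2 3]
  unfolding closed_forms_def assms(3-7) by (simp add: algebra_simps)

text \<open>Prepending \<open>True\<close> to \<open>True # r\<close>; \<open>x\<close>, \<open>y\<close>, \<open>z\<close> indicate that the leading run of \<open>r\<close> has length
0, 1 or 2.\<close>

lemma closed_forms_True_True:
  assumes "closed_forms W M P Q f" and "closed_forms W' M' P' Q' g"
    and "(x, y, z) \<in> {(1, 0, 0), (0, 1, 0), (0, 0, 1), (0, 0, 0)}"
    and "W' = W + 1 - x" "M' = M + x" "P' = P + y" "Q' = Q + y - z"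
    and "\<And>a k. h a k = g a k + (if 1 \<le> a \<and> 1 \<le> k then f (a - 1) (k - 1) else 0)"
    and "W'' = W' + 1" "M'' = M'" "P'' = P' + x" "Q'' = Q' - y + x"
  shows "closed_forms W'' M'' P'' Q'' h"
  using assms(1,2,3) unfolding closed_forms_def assms(4-12)
  by (auto simp: algebra_simps)

lemma closed_forms_level_sums:
  fixes w m m1 m2 C2 C3 D2 D3 :: int
  assumes cf: "closed_forms (w - m) m (m - m1) m2 f" and zero: "\<And>a k. a < k \<Longrightarrow> f a k = 0"
    and C2: "2 * C2 = m * (m - 1)" and C3: "6 * C3 = m * (m - 1) * (m - 2)"
    and D2: "2 * D2 = (w - m) * (w - m - 1)" and D3: "6 * D3 = (w - m) * (w - m - 1) * (w - m - 2)"
  shows "(\<Sum>a\<le>3. f a 0) = 1 + m + C2 + C3" (is "?s0 = ?r0")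
    and "(\<Sum>a\<le>3. f a 1) = (w - m) * (1 + m + C2) - m * (m - m1)" (is "?s1 = ?r1")
    and "(\<Sum>a\<le>3. f a 2) = (1 + m) * (D2 - (w - m)) - (w - 2 * m - 3) * (m - m1) - m2" (is "?s2 = ?r2")
    and "(\<Sum>a\<le>3. f a 3) = D3 - (w - m) * (w - m + 1) + (w - m) * (m - m1) + 4 * (w - 2 * m + m1) + m2"
      (is "?s3 = ?r3")
proof -
  have sum: "(\<Sum>a\<le>3. f a k) = f 0 k + f 1 k + f 2 k + f 3 k" for k
    by (simp add: numeral_3_eq_3 numeral_2_eq_2)
  have zeros: "f 0 1 = 0" "f 0 2 = 0" "f 1 2 = 0" "f 0 3 = 0" "f 1 3 = 0" "f 2 3 = 0"
    by (simp_all add: zero)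
  have "6 * ?s0 = 6 * ?r0" "2 * ?s1 = 2 * ?r1" "2 * ?s2 = 2 * ?r2" "6 * ?s3 = 6 * ?r3"
    using cf zeros C2 C3 D2 D3 unfolding sum closed_forms_def by (elim conjE; algebra)+
  thus "?s0 = ?r0" "?s1 = ?r1" "?s2 = ?r2" "?s3 = ?r3" by simp_all
qed

lemma bool_list_induct [case_names Nil False True_Nil True_False True_True]:
  "\<lbrakk>P []; \<And>r. P r \<Longrightarrow> P (False # r); P [True]; \<And>r. P r \<Longrightarrow> P (True # False # r);
    \<And>r. P r \<Longrightarrow> P (True # r) \<Longrightarrow> P (True # True # r)\<rbrakk> \<Longrightarrow> P d"
  by induction_schema (pat_completeness, lexicographic_order)

lemma sparse_count_closed_forms:
  "closed_forms (int (weight d) - int (card (one_runs d))) (int (card (one_runs d)))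
     (int (card (one_runs d)) - int (num_runs_len d 1)) (int (num_runs_len d 2))
     (\<lambda>a k. int (sparse_count d a k))"
  unfolding card_one_runs_eq_runs_with num_runs_len_eq_runs_with
proof (induction d rule: bool_list_induct)
  case Nil
  show ?case by (simp add: closed_forms_def sparse_count_Nil runs_with_Nil weight_def)
next
  case (False r)
  then show ?case by (simp add: sparse_count_False runs_with_False weight_def)
next
  case True_Nil
  show ?case by (simp add: closed_forms_def sparse_count_True_Nil runs_with_True runs_with_Nil weight_def)
next
  case (True_False r)
  show ?case
    by (rule closed_forms_True_False[OF True_False.IH])
      (auto simp: sparse_count_eq_0 sparse_count_True_False runs_with_True runs_with_False weight_def)
next
  case (True_True r)
  show ?case
    by (rule closed_forms_True_True[OF True_True.IH, where x = "of_bool (leading_ones r = 0)"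
          and y = "of_bool (leading_ones r = 1)" and z = "of_bool (leading_ones r = 2)"])
      (auto simp: sparse_count_True_True runs_with_True weight_def)
qed

lemma card_weight_drop_pair:
  "card {S \<in> sparse_ones d. card S \<le> t \<and> 2 * nonlast_count d S + last_count d S = 2 * k}
 + card {S \<in> sparse_ones d. card S \<le> t \<and> 2 * nonlast_count d S + last_count d S = 2 * k + 1}
 = card {S \<in> sparse_ones d. card S \<le> t \<and> nonlast_count d S = k}"
proof -
  have "card {S \<in> sparse_ones d. card S \<le> t \<and> nonlast_count d S = k}
      = card ({S \<in> sparse_ones d. card S \<le> t \<and> 2 * nonlast_count d S + last_count d S = 2 * k}
      \<union> {S \<in> sparse_ones d. card S \<le> t \<and> 2 * nonlast_count d S + last_count d S = 2 * k + 1})"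
  proof -
    have "nonlast_count d S = k \<longleftrightarrow> 2 * nonlast_count d S + last_count d S = 2 * k
        \<or> 2 * nonlast_count d S + last_count d S = 2 * k + 1" for S
      using last_count_le_1[of d S] by arith
    thus ?thesis by (intro arg_cong[where f=card]) blast
  qed
  also have "\<dots> = card {S \<in> sparse_ones d. card S \<le> t \<and> 2 * nonlast_count d S + last_count d S = 2 * k}
      + card {S \<in> sparse_ones d. card S \<le> t \<and> 2 * nonlast_count d S + last_count d S = 2 * k + 1}"
    by (rule card_Un_disjoint) (auto simp: finite_sparse_ones)
  finally show ?thesis by simp
qed

lemma card_weight_drop_top_odd:
  "card {S \<in> sparse_ones d. card S \<le> t \<and> 2 * nonlast_count d S + last_count d S = 2 * t + 1} = 0"
proof -
  have "{S \<in> sparse_ones d. card S \<le> t \<and> 2 * nonlast_count d S + last_count d S = 2 * t + 1} = {}"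
    using nonlast_count_plus_last_count_le_card[of _ d] last_count_le_1[of d] by fastforce
  thus ?thesis by (simp only: card.empty)
qed

lemma card_sparse_ones_le_eq_sum:
  "card {S \<in> sparse_ones d. card S \<le> t \<and> nonlast_count d S = k} = (\<Sum>a\<le>t. sparse_count d a k)"
proof (induction t)
  case 0
  show ?case by (simp add: sparse_count_def)
next
  case (Suc t)
  have "{S \<in> sparse_ones d. card S \<le> Suc t \<and> nonlast_count d S = k}
      = {S \<in> sparse_ones d. card S \<le> t \<and> nonlast_count d S = k}
      \<union> {S \<in> sparse_ones d. card S = Suc t \<and> nonlast_count d S = k}"
    by auto
  also have "card \<dots> = card {S \<in> sparse_ones d. card S \<le> t \<and> nonlast_count d S = k}
      + card {S \<in> sparse_ones d. card S = Suc t \<and> nonlast_count d S = k}"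
    by (rule card_Un_disjoint) (auto simp: finite_sparse_ones)
  finally show ?case using Suc.IH by (simp add: sparse_count_def)
qed

lemma choose_two_int: "2 * int (N choose 2) = int N * (int N - 1)"
proof (induction N)
  case (Suc N)
  have "Suc N choose 2 = N + (N choose 2)"
    by (metis Suc_1 binomial_Suc_Suc choose_one)
  thus ?case using Suc by (simp add: algebra_simps)
qed simp

lemma choose_three_int: "6 * int (N choose 3) = int N * (int N - 1) * (int N - 2)"
proof (induction N)
  case (Suc N)
  have "Suc N choose 3 = (N choose 2) + (N choose 3)"
    by (metis binomial_Suc_Suc numeral_2_eq_2 numeral_3_eq_3)
  thus ?case using Suc choose_two_int[of N] by (simp add: algebra_simps)
qed simp

theorem lemma4p4:
  fixes n :: nat and x :: "bool list"
  assumes "n \<ge> 1" and "length x = n"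
  defines "\<omega> \<equiv> weight (deriv_seq x)"
    and "m \<equiv> card (one_runs (deriv_seq x))"
    and "m1 \<equiv> num_runs_len (deriv_seq x) 1"
    and "m2 \<equiv> num_runs_len (deriv_seq x) 2"
    and "B \<equiv> \<lambda>j::nat. card {y \<in> Phi n 3 x. int (weight (deriv_seq y)) = int (weight (deriv_seq x)) - int j}"
  shows "(int (B 0 + B 1) = 1 + int m + int (m choose 2) + int (m choose 3))
    \<and> (int (B 2 + B 3) = (int \<omega> - int m) * (1 + int m + int (m choose 2)) - int m * (int m - int m1))
    \<and> (int (B 4 + B 5) = (1 + int m) * (int ((\<omega> - m) choose 2) - (int \<omega> - int m))
           - (int \<omega> - 2 * int m - 3) * (int m - int m1) - int m2)
    \<and> (int (B 6) = int ((\<omega> - m) choose 3) - (int \<omega> - int m) * (int \<omega> - int m + 1)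
           + (int \<omega> - int m) * (int m - int m1) + 4 * (int \<omega> - 2 * int m + int m1) + int m2)"
proof -
  define d where "d = deriv_seq x"
  let ?f = "\<lambda>a k. int (sparse_count d a k)"
  have B: "B j = card {S \<in> sparse_ones d. card S \<le> 3 \<and> 2 * nonlast_count d S + last_count d S = j}" for j
    unfolding B_def d_def by (rule card_Phi_weight_drop[OF assms(2)])
  have level: "int (B (2 * k) + B (2 * k + 1)) = (\<Sum>a\<le>3. ?f a k)" for k
    unfolding B card_weight_drop_pair card_sparse_ones_le_eq_sum by simp
  have "B 7 = 0"
    using card_weight_drop_top_odd[of d 3] unfolding B by simp
  with level[of 3] have B6: "int (B 6) = (\<Sum>a\<le>3. ?f a 3)" by simp
  have cf: "closed_forms (int \<omega> - int m) (int m) (int m - int m1) (int m2) ?f"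
    using sparse_count_closed_forms[of d] unfolding \<omega>_def m_def m1_def m2_def d_def .
  hence "m \<le> \<omega>" unfolding closed_forms_def by simp
  hence "2 * int ((\<omega> - m) choose 2) = (int \<omega> - int m) * (int \<omega> - int m - 1)"
    and "6 * int ((\<omega> - m) choose 3) = (int \<omega> - int m) * (int \<omega> - int m - 1) * (int \<omega> - int m - 2)"
    using choose_two_int[of "\<omega> - m"] choose_three_int[of "\<omega> - m"] by (simp_all add: of_nat_diff)
  note choose_diff = this
  have zero: "?f a k = 0" if "a < k" for a k
    using that by (simp add: sparse_count_eq_0)
  note sums = closed_forms_level_sums[OF cf zero choose_two_int[of m] choose_three_int[of m] choose_diff]
  show ?thesis using level[of 0] level[of 1] level[of 2] B6 sums by simp
qed

end
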